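(* Let $n\ge2$ and let $A\in M_n(\mathbb C)$ be nonzero. Then $\mathrm{rk}\,A=1$ if and only if there exist $n-1$ smooth elements $A_2,\dots,A_n\in M_n(\mathbb C)$ such that $A\in\bigcap_{i=2}^nA_i^\perp$ and $A$ is left-symmetric relative to $\bigcap_{i=2}^nA_i^\perp$.
   Context: $M_n(\mathbb C)$ carries the operator (spectral) norm. $X\perp Y$ (Birkhoff–James orthogonality) means $\|X+\lambda Y\|\ge\|X\|$ for all $\lambda\in\mathbb C$, and $X^\perp:=\{Y: X\perp Y\}$. $X$ is smooth if there is no $Y$ with $Y^\perp\subsetneq X^\perp$. For a subset $\mathcal S$, an element $X\in\mathcal S$ is left-symmetric relative to $\mathcal S$ if for every $Y\in\mathcal S$, $X\perp Y$ implies $Y\perp X$. *)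

theory Defs
  imports "HOL-Analysis.Analysis"
begin

definition opnorm :: "complex^'n^'n \<Rightarrow> real" where
  "opnorm A = onorm (\<lambda>x. A *v x)"

definition cmscale :: "complex \<Rightarrow> complex^'n^'m \<Rightarrow> complex^'n^'m" where
  "cmscale c Y = (\<chi> i j. c * Y $ i $ j)"

definition bj_orth :: "complex^'n^'n \<Rightarrow> complex^'n^'n \<Rightarrow> bool" where
  "bj_orth X Y \<longleftrightarrow> (\<forall>c::complex. opnorm (X + cmscale c Y) \<ge> opnorm X)"

definition orth_set :: "complex^'n^'n \<Rightarrow> (complex^'n^'n) set" where
  "orth_set X = {Y. bj_orth X Y}"

definition smooth :: "complex^'n^'n \<Rightarrow> bool" where
  "smooth X \<longleftrightarrow> \<not> (\<exists>Y. orth_set Y \<subset> orth_set X)"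

definition left_symmetric_rel :: "(complex^'n^'n) set \<Rightarrow> complex^'n^'n \<Rightarrow> bool" where
  "left_symmetric_rel S X \<longleftrightarrow> X \<in> S \<and> (\<forall>Y\<in>S. bj_orth X Y \<longrightarrow> bj_orth Y X)"

end

theory Submission
  imports Defs
begin

text \<open>
  If a unit vector p attains the norm of X
  and X p is orthogonal to Z p, then X is Birkhoff--James orthogonal to Z; for a rank-one matrix
  the converse holds, s t* being orthogonal to Z exactly when <s, Z t> = 0. Consequently the
  orthogonality set of a smooth matrix B is the kernel {Z. <B p, Z p> = 0} of a rank-one
  functional, p a norming vector of B.

  If A = u v*, take B_j = u x_j* with the x_j spanning the orthogonal complement of v. When Y lies
  in the intersection S of their orthogonality sets and A is orthogonal to Y, the vector Y* u is
  orthogonal to v and to every x_j, so Y* u = 0 and Y is orthogonal to A.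

  Conversely write S = {Y. <w_j, Y x_j> = 0 for j \<noteq> j1}, let A p = sigma q and A* q = sigma p
  with sigma = ||A||, and put w_j1 = q, x_j1 = p. Left symmetry tested on rank-one matrices s t*
  gives <s, A t> = 0 whenever for each j either s is orthogonal to w_j or t to x_j. If the w_j
  span, this puts A* into the span of the x_j w_j*, and a Frobenius inner product computation
  yields A = sigma q p*; likewise if the x_j span. Otherwise there are unit vectors s and t
  orthogonal to all w_j and all x_j respectively, and Y = s p* + q t* + s t* lies in S with A
  orthogonal to Y, while ||Y - A/(2 sigma)|| \<le> 3/2 < ||Y||.
\<close>

section \<open>Hermitian inner product on complex vectors\<close>

definition cinner :: "complex^'n \<Rightarrow> complex^'n \<Rightarrow> complex" where
  "cinner x y = (\<Sum>i\<in>UNIV. cnj (x$i) * y$i)"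

lemma cinner_add_left: "cinner (x + y) z = cinner x z + cinner y z"
  by (simp add: cinner_def distrib_right sum.distrib)

lemma cinner_add_right: "cinner x (y + z) = cinner x y + cinner x z"
  by (simp add: cinner_def distrib_left sum.distrib)

lemma cinner_diff_right: "cinner x (y - z) = cinner x y - cinner x z"
  by (simp add: cinner_def right_diff_distrib sum_subtractf)

lemma cinner_smult_left: "cinner (c *s x) y = cnj c * cinner x y"
  by (simp add: cinner_def sum_distrib_left mult_ac)

lemma cinner_smult_right: "cinner x (c *s y) = c * cinner x y"
  by (simp add: cinner_def sum_distrib_left mult_ac)

lemma cinner_zero_left [simp]: "cinner 0 x = 0"
  and cinner_zero_right [simp]: "cinner x 0 = 0"
  by (simp_all add: cinner_def)

lemma cinner_sum_right: "cinner x (\<Sum>j\<in>J. f j) = (\<Sum>j\<in>J. cinner x (f j))"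
  by (induction J rule: infinite_finite_induct) (auto simp: cinner_add_right)

lemma cinner_commute: "cinner y x = cnj (cinner x y)"
  by (simp add: cinner_def mult.commute)

lemma cinner_eq_zero_sym: "cinner y x = 0 \<longleftrightarrow> cinner x y = 0"
  by (simp add: cinner_commute[of y])

lemma cnj_mult_self: "cnj z * z = of_real ((cmod z)\<^sup>2)"
  using complex_norm_square[of z] by (simp add: mult.commute)

lemma cinner_self: "cinner x x = of_real ((norm x)\<^sup>2)"
proof -
  have "cinner x x = (\<Sum>i\<in>UNIV. of_real ((cmod (x$i))\<^sup>2))"
    unfolding cinner_def by (simp add: cnj_mult_self)
  then show ?thesis
    by (simp add: norm_vec_def L2_set_def sum_nonneg)
qed

lemma cinner_self_eq_zero [simp]: "cinner x x = 0 \<longleftrightarrow> x = 0"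
  by (simp add: cinner_self)

lemma cinner_unit_self: "norm x = 1 \<Longrightarrow> cinner x x = 1"
  by (simp add: cinner_self)

lemma cinner_axis_right: "cinner v (axis k 1) = cnj (v$k)"
  by (simp add: cinner_def axis_def if_distrib cong: if_cong)

lemma Re_cinner: "Re (cinner x y) = inner x y"
  by (simp add: cinner_def inner_vec_def inner_complex_def Re_sum)

lemma norm_vector_smult: "norm (c *s (x::complex^'n)) = cmod c * norm x"
proof -
  have "(norm (c *s x))\<^sup>2 = (cmod c * norm x)\<^sup>2"
    by (simp add: norm_vec_def L2_set_def sum_nonneg power_mult_distrib norm_mult sum_distrib_left)
  then show ?thesis
    by (simp add: power2_eq_iff_nonneg)
qed

lemma norm_normalize: "x \<noteq> 0 \<Longrightarrow> norm (of_real (1 / norm x) *s (x::complex^'n)) = 1"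
  by (simp add: norm_vector_smult norm_divide)

lemma norm_add_square:
  "(norm (x + y :: complex^'n))\<^sup>2 = (norm x)\<^sup>2 + 2 * Re (cinner x y) + (norm y)\<^sup>2"
  by (simp add: Re_cinner power2_norm_eq_inner inner_add inner_commute)

lemma norm_add_square_orthogonal:
  "cinner x y = 0 \<Longrightarrow> (norm (x + y :: complex^'n))\<^sup>2 = (norm x)\<^sup>2 + (norm y)\<^sup>2"
  by (simp add: norm_add_square)

lemma norm_add3_square_orthogonal:
  fixes u v w :: "complex^'n"
  assumes "cinner u v = 0" "cinner u w = 0" "cinner v w = 0"
  shows "(norm (u + v + w))\<^sup>2 = (norm u)\<^sup>2 + (norm v)\<^sup>2 + (norm w)\<^sup>2"
  using assms by (simp add: norm_add_square_orthogonal cinner_add_left)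

lemma orthonormal_pair_decomposition:
  assumes "norm p = 1" "norm t = 1" "cinner p t = 0"
  obtains z where "x = cinner p x *s p + cinner t x *s t + z" "cinner p z = 0" "cinner t z = 0"
    "(norm x)\<^sup>2 = (cmod (cinner p x))\<^sup>2 + (cmod (cinner t x))\<^sup>2 + (norm z)\<^sup>2"
proof
  define z where "z = x - cinner p x *s p - cinner t x *s t"
  have tp: "cinner t p = 0"
    using assms(3) by (simp add: cinner_eq_zero_sym)
  show "x = cinner p x *s p + cinner t x *s t + z"
    by (simp add: z_def)
  show pz: "cinner p z = 0" and tz: "cinner t z = 0"
    using assms tp by (simp_all add: z_def cinner_diff_right cinner_smult_right cinner_unit_self)
  show "(norm x)\<^sup>2 = (cmod (cinner p x))\<^sup>2 + (cmod (cinner t x))\<^sup>2 + (norm z)\<^sup>2"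
    by (subst (1) \<open>x = cinner p x *s p + cinner t x *s t + z\<close>, subst norm_add3_square_orthogonal)
      (simp_all add: cinner_smult_left cinner_smult_right assms pz tz norm_vector_smult)
qed

lemma norm_cinner_le: "cmod (cinner x y) \<le> norm x * norm y"
proof (cases "cinner x y = 0")
  case False
  define l where "l = cinner x y / of_real (cmod (cinner x y))"
  have "cmod (cinner x y) = Re (cinner (l *s x) y)"
    using False cmod_power2[of "cinner x y"]
    by (simp add: cinner_smult_left l_def power2_eq_square field_simps)
  also have "\<dots> \<le> norm (l *s x) * norm y"
    unfolding Re_cinner by (rule norm_cauchy_schwarz)
  also have "\<dots> = norm x * norm y"
    using False by (simp add: norm_vector_smult l_def norm_divide)
  finally show ?thesis .
qed simp

lemma multiple_if_perp_perp:
  assumes "\<And>t. cinner x t = 0 \<Longrightarrow> cinner t v = 0"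
  shows "\<exists>c. v = c *s x"
proof -
  define t where "t = v - (cinner x v / cinner x x) *s x"
  have "cinner x t = 0"
    by (cases "x = 0") (simp_all add: t_def cinner_diff_right cinner_smult_right)
  then have "cinner t t = 0"
    using assms by (simp add: t_def cinner_diff_right cinner_smult_right cinner_eq_zero_sym)
  then show ?thesis
    by (auto simp: t_def)
qed

lemma orthogonal_complement_spanning_family:
  fixes v :: "complex^'n"
  assumes vk: "v$k \<noteq> 0"
  obtains x :: "'n \<Rightarrow> complex^'n"
  where "\<And>j. cinner v (x j) = 0" and "\<And>j. j \<noteq> k \<Longrightarrow> x j \<noteq> 0"
    and "\<And>r. cinner r v = 0 \<Longrightarrow> (\<And>j. j \<noteq> k \<Longrightarrow> cinner r (x j) = 0) \<Longrightarrow> r = 0"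
proof
  define x where "x j = axis j 1 - (cnj (v$j) / cnj (v$k)) *s axis k 1" for j
  show "cinner v (x j) = 0" for j
    using vk by (simp add: x_def cinner_diff_right cinner_smult_right cinner_axis_right)
  show "x j \<noteq> 0" if "j \<noteq> k" for j
  proof
    assume "x j = 0"
    then have "x j $ j = 0"
      by simp
    then show False
      using that by (simp add: x_def axis_def)
  qed
  fix r
  assume rv: "cinner r v = 0" and rx: "\<And>j. j \<noteq> k \<Longrightarrow> cinner r (x j) = 0"
  define l where "l = cnj (r$k) / cnj (v$k)"
  have r: "cnj (r$j) = l * cnj (v$j)" for j
  proof (cases "j = k")
    case False
    then show ?thesis
      using rx[OF False] vk
      by (simp add: x_def cinner_diff_right cinner_smult_right cinner_axis_right l_def field_simps)
  qed (use vk in \<open>simp add: l_def\<close>)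
  then have "cinner r v = l * cinner v v"
    by (simp add: cinner_def sum_distrib_left mult_ac)
  then have "l = 0"
    using rv assms by (auto simp: vec_eq_iff)
  then show "r = 0"
    using r by (simp add: vec_eq_iff)
qed

lemma dual_family_exists:
  fixes w :: "'n \<Rightarrow> complex^'n"
  assumes span: "\<And>s. (\<And>j. cinner (w j) s = 0) \<Longrightarrow> s = 0"
  obtains s where "\<And>i j. cinner (w i) (s j) = (if i = j then 1 else 0)"
proof -
  define W :: "complex^'n^'n" where "W = (\<chi> j k. cnj (w j $ k))"
  have W: "W *v y = (\<chi> j. cinner (w j) y)" for y
    by (simp add: W_def matrix_vector_mult_def cinner_def vec_eq_iff)
  have "inj ((*v) W)"
  proof (rule injI)
    fix a b
    assume "W *v a = W *v b"
    then have "a - b = 0"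
      by (intro span) (simp add: W vec_eq_iff cinner_diff_right)
    then show "a = b"
      by simp
  qed
  then have "surj ((*v) W)"
    by (rule vec.linear_inj_imp_surj[OF matrix_vector_mul_linear_gen])
  then have "\<forall>j. \<exists>s. W *v s = axis j 1"
    by (metis surjD)
  then obtain s where "\<And>j. W *v s j = axis j 1"
    by metis
  then have "cinner (w i) (s j) = (if i = j then 1 else 0)" for i j
    using W[of "s j"] by (simp add: vec_eq_iff axis_def)
  then show ?thesis
    using that by blast
qed

lemma dual_family_expansion:
  fixes w s :: "'n \<Rightarrow> complex^'n"
  assumes span: "\<And>s. (\<And>j. cinner (w j) s = 0) \<Longrightarrow> s = 0"
    and dual: "\<And>i j. cinner (w i) (s j) = (if i = j then 1 else 0)"
  shows "y = (\<Sum>j\<in>UNIV. cinner (w j) y *s s j)"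
proof -
  have "cinner (w i) (y - (\<Sum>j\<in>UNIV. cinner (w j) y *s s j)) = 0" for i
    by (simp add: cinner_diff_right cinner_sum_right cinner_smult_right dual if_distrib sum.delta
        cong: if_cong)
  then show ?thesis
    using span by fastforce
qed

section \<open>Rank-one matrices and the Frobenius inner product\<close>

definition outer :: "complex^'n \<Rightarrow> complex^'n \<Rightarrow> complex^'n^'n" where
  "outer s t = (\<chi> i k. s$i * cnj (t$k))"

definition conj_transpose :: "complex^'n^'n \<Rightarrow> complex^'n^'n" where
  "conj_transpose A = (\<chi> i k. cnj (A$k$i))"

lemma outer_mult_vector: "outer s t *v x = cinner t x *s s"
  by (simp add: outer_def matrix_vector_mult_def cinner_def sum_distrib_left mult_ac vec_eq_iff)

lemma cmscale_mult_vector: "cmscale c Y *v x = c *s (Y *v x)"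
  by (simp add: cmscale_def matrix_vector_mult_def sum_distrib_left mult_ac vec_eq_iff)

lemma cmscale_add_right: "cmscale c (X + Y) = cmscale c X + cmscale c Y"
  by (simp add: cmscale_def vec_eq_iff algebra_simps)

lemma cmscale_cmscale: "cmscale a (cmscale b X) = cmscale (a * b) X"
  by (simp add: cmscale_def vec_eq_iff)

lemma outer_smult: "outer (a *s s) (b *s t) = cmscale (a * cnj b) (outer s t)"
  by (simp add: outer_def cmscale_def vec_eq_iff mult_ac)

lemma sum_matrix_vector_mult: "(\<Sum>j\<in>J. M j) *v y = (\<Sum>j\<in>J. M j *v y)"
  by (induction J rule: infinite_finite_induct) (simp_all add: matrix_vector_mult_add_rdistrib)

lemma cinner_conj_transpose_left: "cinner (conj_transpose A *v x) y = cinner x (A *v y)"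
proof -
  have "cinner x (A *v y) = (\<Sum>i\<in>UNIV. \<Sum>j\<in>UNIV. cnj (x$i) * A$i$j * y$j)"
    by (simp add: cinner_def matrix_vector_mult_def sum_distrib_left mult.assoc)
  also have "\<dots> = (\<Sum>j\<in>UNIV. \<Sum>i\<in>UNIV. cnj (x$i) * A$i$j * y$j)"
    by (rule sum.swap)
  also have "\<dots> = cinner (conj_transpose A *v x) y"
    by (simp add: cinner_def conj_transpose_def matrix_vector_mult_def sum_distrib_left mult_ac)
  finally show ?thesis ..
qed

lemma conj_transpose_conj_transpose [simp]: "conj_transpose (conj_transpose A) = A"
  by (simp add: conj_transpose_def vec_eq_iff)

lemma cinner_conj_transpose_right: "cinner x (conj_transpose A *v y) = cinner (A *v x) y"
  using cinner_conj_transpose_left[of "conj_transpose A"] by simp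

lemma conj_transpose_outer: "conj_transpose (outer s t) = outer t s"
  by (simp add: conj_transpose_def outer_def vec_eq_iff)

lemma rank_outer:
  fixes u v :: "complex^'n"
  assumes "u \<noteq> 0" "v \<noteq> 0"
  shows "rank (outer u v) = 1"
proof -
  define cv :: "complex^'n" where "cv = (\<chi> k. cnj (v$k))"
  have row: "row i (outer u v) = (u$i) *s cv" for i
    by (simp add: row_def outer_def cv_def vec_eq_iff)
  then have "rows (outer u v) \<subseteq> vec.span {cv}"
    using vec.span_singleton[of cv] by (auto simp: rows_def)
  then have "vec.dim (rows (outer u v)) \<le> 1"
    using vec.dim_le_card[of "rows (outer u v)" "{cv}"] by simp
  moreover obtain i k where "u$i \<noteq> 0" "v$k \<noteq> 0"
    using assms by (auto simp: vec_eq_iff)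
  then have "row i (outer u v) \<noteq> 0"
    by (auto simp: row cv_def vec_eq_iff)
  then have "vec.dim (rows (outer u v)) \<noteq> 0"
    using vec.dim_eq_0 by (auto simp: rows_def)
  ultimately show ?thesis
    unfolding row_rank_def_gen by linarith
qed

lemma rank_one_imp_outer:
  fixes A :: "complex^'n^'n"
  assumes "rank A = 1"
  shows "\<exists>u v. u \<noteq> 0 \<and> v \<noteq> 0 \<and> A = outer u v"
proof -
  have dim: "vec.dim (rows A) = 1"
    using assms by (simp add: row_rank_def_gen)
  obtain B where B: "vec.independent B" "rows A \<subseteq> vec.span B" "card B = 1"
    using vec.basis_exists[of "rows A"] dim by metis
  obtain b where b: "B = {b}"
    using B(3) card_1_singletonE by blast
  have "b \<noteq> 0"
    using B(1) b vec.dependent_zero by blast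
  have "\<exists>c. A$i = c *s b" for i
  proof -
    have "A$i \<in> rows A"
      by (auto simp: rows_def row_def vec_eq_iff)
    then show ?thesis
      using B(2) b vec.span_singleton by blast
  qed
  then obtain c where c: "\<And>i. A$i = c i *s b"
    by metis
  define u :: "complex^'n" where "u = (\<chi> i. c i)"
  define v :: "complex^'n" where "v = (\<chi> k. cnj (b$k))"
  have A: "A = outer u v"
    by (simp add: outer_def u_def v_def vec_eq_iff c)
  have "v \<noteq> 0"
    using \<open>b \<noteq> 0\<close> by (auto simp: v_def vec_eq_iff)
  moreover have "u \<noteq> 0"
  proof
    assume "u = 0"
    then have "rows A \<subseteq> {0}"
      by (auto simp: A outer_def rows_def row_def vec_eq_iff)
    then have "vec.dim (rows A) = 0"
      using vec.dim_eq_0 by blast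
    then show False
      using dim by simp
  qed
  ultimately show ?thesis
    using A by blast
qed

lemma rank_eq_one_iff_outer:
  fixes A :: "complex^'n^'n"
  shows "rank A = 1 \<longleftrightarrow> (\<exists>u v. u \<noteq> 0 \<and> v \<noteq> 0 \<and> A = outer u v)"
  using rank_one_imp_outer rank_outer by metis

definition frob_inner :: "complex^'n^'n \<Rightarrow> complex^'n^'n \<Rightarrow> complex" where
  "frob_inner X Y = (\<Sum>i\<in>UNIV. cinner (X$i) (Y$i))"

lemma frob_inner_commute: "frob_inner Y X = cnj (frob_inner X Y)"
  by (simp add: frob_inner_def cinner_commute[of "Y$_"])

lemma frob_inner_diff_right: "frob_inner X (Y - Z) = frob_inner X Y - frob_inner X Z"
  by (simp add: frob_inner_def cinner_diff_right sum_subtractf)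

lemma frob_inner_cmscale_right: "frob_inner X (cmscale c Y) = c * frob_inner X Y"
  by (simp add: frob_inner_def cinner_def cmscale_def sum_distrib_left mult_ac)

lemma frob_inner_sum_left: "frob_inner (\<Sum>j\<in>J. f j) Y = (\<Sum>j\<in>J. frob_inner (f j) Y)"
  by (induction J rule: infinite_finite_induct)
    (auto simp: frob_inner_def cinner_add_left sum.distrib)

lemma frob_inner_outer_left: "frob_inner (outer a b) Y = cinner a (Y *v b)"
  by (simp add: frob_inner_def outer_def cinner_def matrix_vector_mult_def
      sum_distrib_left sum_distrib_right mult_ac)

lemma frob_inner_self_eq_zero: "frob_inner X X = 0 \<longleftrightarrow> X = 0"
proof
  assume "frob_inner X X = 0"
  moreover have "frob_inner X X = of_real (\<Sum>i\<in>UNIV. (norm (X$i))\<^sup>2)"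
    by (simp add: frob_inner_def cinner_self)
  ultimately have "(\<Sum>i\<in>UNIV. (norm (X$i))\<^sup>2) = 0"
    by (simp only: of_real_eq_0_iff)
  then have "\<forall>i. (norm (X$i))\<^sup>2 = 0"
    by (simp add: sum_nonneg_eq_0_iff)
  then show "X = 0"
    by (simp add: vec_eq_iff)
qed (simp add: frob_inner_def)

lemma frob_inner_kernel_subset:
  assumes "N \<noteq> 0" and sub: "{Z. frob_inner M Z = 0} \<subseteq> {Z. frob_inner N Z = 0}"
  shows "{Z. frob_inner N Z = 0} \<subseteq> {Z. frob_inner M Z = 0}"
proof (rule ccontr)
  assume "\<not> ?thesis"
  then obtain Z where NZ: "frob_inner N Z = 0" and MZ: "frob_inner M Z \<noteq> 0"
    by blast
  have "frob_inner N Y = 0" for Y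
  proof -
    define Y' where "Y' = Y - cmscale (frob_inner M Y / frob_inner M Z) Z"
    have "frob_inner M Y' = 0"
      using MZ by (simp add: Y'_def frob_inner_diff_right frob_inner_cmscale_right)
    then have "frob_inner N Y' = 0"
      using sub by blast
    then show ?thesis
      using NZ by (simp add: Y'_def frob_inner_diff_right frob_inner_cmscale_right)
  qed
  then show False
    using assms(1) frob_inner_self_eq_zero by blast
qed

lemma frob_inner_dual_family:
  fixes w s :: "'n \<Rightarrow> complex^'n"
  assumes span: "\<And>s. (\<And>j. cinner (w j) s = 0) \<Longrightarrow> s = 0"
    and dual: "\<And>i j. cinner (w i) (s j) = (if i = j then 1 else 0)"
  shows "frob_inner M Y = (\<Sum>j\<in>UNIV. cinner (M *v s j) (Y *v w j))"
proof -
  have Mv: "M *v y = (\<Sum>j\<in>UNIV. outer (M *v s j) (w j)) *v y" for y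
  proof -
    have "M *v y = M *v (\<Sum>j\<in>UNIV. cinner (w j) y *s s j)"
      using dual_family_expansion[OF span dual, of y] by (rule arg_cong)
    then show ?thesis
      by (simp add: vec.sum sum_matrix_vector_mult outer_mult_vector vector_scalar_commute)
  qed
  have "M = (\<Sum>j\<in>UNIV. outer (M *v s j) (w j))"
    by (rule iffD2[OF matrix_eq]) (use Mv in blast)
  then have "frob_inner M Y = frob_inner (\<Sum>j\<in>UNIV. outer (M *v s j) (w j)) Y"
    by (rule arg_cong)
  then show ?thesis
    by (simp add: frob_inner_sum_left frob_inner_outer_left)
qed

lemma eq_outer_if_vanishing_on_spanning_family:
  fixes M :: "complex^'n^'n" and w x :: "'n \<Rightarrow> complex^'n"
  assumes span: "\<And>s. (\<And>j. cinner (w j) s = 0) \<Longrightarrow> s = 0"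
    and vanish: "\<And>s t. (\<And>j. cinner (w j) s = 0 \<or> cinner (x j) t = 0) \<Longrightarrow> cinner t (M *v s) = 0"
    and diag: "\<And>j. j \<noteq> j1 \<Longrightarrow> cinner (x j) (M *v w j) = 0"
    and w1: "norm (w j1) = 1" and x1: "norm (x j1) = 1"
    and Mw1: "M *v w j1 = \<sigma> *s x j1" and Mx1: "conj_transpose M *v x j1 = cnj \<sigma> *s w j1"
  shows "M = outer (M *v w j1) (w j1)"
proof -
  obtain s where dual: "\<And>i j. cinner (w i) (s j) = (if i = j then 1 else 0)"
    using dual_family_exists[OF span] by blast
  have "\<exists>c. M *v s j = c *s x j" for j
  proof (rule multiple_if_perp_perp)
    fix t
    assume "cinner (x j) t = 0"
    then show "cinner t (M *v s j) = 0"
      by (intro vanish) (auto simp: dual)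
  qed
  then obtain c where c: "\<And>j. M *v s j = c j *s x j"
    by metis
  \<comment> \<open>M0 is Frobenius-orthogonal to M (trace over the dual family s) and to
    (M w_j1) w_j1*, hence to itself.\<close>
  define M0 where "M0 = M - outer (M *v w j1) (w j1)"
  have M0v: "M0 *v y = M *v y - cinner (w j1) y *s (M *v w j1)" for y
    by (simp add: M0_def matrix_vector_mult_diff_rdistrib outer_mult_vector)
  have "cinner (M0 *v s j) (M *v w j) = 0" for j
  proof (cases "j = j1")
    case True
    have "c j1 = \<sigma>"
      using cinner_conj_transpose_left[of M "x j1" "s j1"]
      by (simp add: c Mx1 cinner_smult_left cinner_smult_right dual cinner_unit_self[OF x1])
    then show ?thesis
      using True by (simp add: M0v c Mw1 dual)
  next
    case False
    then show ?thesis
      using diag[OF False] by (simp add: M0v c dual cinner_smult_left)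
  qed
  then have "frob_inner M0 M = 0"
    by (simp add: frob_inner_dual_family[OF span dual])
  moreover have "frob_inner M0 (outer (M *v w j1) (w j1)) = 0"
    by (subst frob_inner_commute)
      (simp add: frob_inner_outer_left M0v cinner_unit_self[OF w1])
  ultimately have "frob_inner M0 M0 = 0"
    by (simp add: M0_def frob_inner_diff_right)
  then show ?thesis
    by (simp add: frob_inner_self_eq_zero M0_def)
qed

section \<open>The operator norm\<close>

lemma opnorm_bound: "norm (A *v x) \<le> opnorm A * norm x"
  unfolding opnorm_def by (rule onorm[OF matrix_vector_mul_bounded_linear])

lemma opnorm_le: "(\<And>x. norm (A *v x) \<le> b * norm x) \<Longrightarrow> opnorm A \<le> b"
  unfolding opnorm_def by (rule onorm_le)

lemma opnorm_nonneg: "0 \<le> opnorm A"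
  unfolding opnorm_def by (rule onorm_pos_le[OF matrix_vector_mul_bounded_linear])

lemma opnorm_le_unit:
  fixes A :: "complex^'n^'n"
  assumes "\<And>x. norm x = 1 \<Longrightarrow> norm (A *v x) \<le> b"
  shows "opnorm A \<le> b"
proof (rule opnorm_le)
  fix x :: "complex^'n"
  show "norm (A *v x) \<le> b * norm x"
  proof (cases "x = 0")
    case False
    let ?r = "of_real (1 / norm x) :: complex"
    have "norm (A *v (?r *s x)) \<le> b"
      using assms norm_normalize[OF False] by blast
    then show ?thesis
      using False by (simp add: vector_scalar_commute norm_vector_smult norm_divide field_simps)
  qed simp
qed

lemma opnorm_attained: "\<exists>p::complex^'n. norm p = 1 \<and> norm (A *v p) = opnorm A"
proof -
  have "sphere (0::complex^'n) 1 \<noteq> {}"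
    using vector_choose_size[of 1] by auto
  moreover have "continuous_on (sphere 0 1) (\<lambda>x. norm (A *v x))"
    by (intro continuous_intros linear_continuous_on bounded_linear.linear
        matrix_vector_mul_bounded_linear)
  ultimately obtain p where p: "p \<in> sphere 0 1"
    and max: "\<forall>y\<in>sphere 0 1. norm (A *v y) \<le> norm (A *v p)"
    using continuous_attains_sup[OF compact_sphere] by blast
  have "opnorm A \<le> norm (A *v p)"
    using max by (intro opnorm_le_unit) simp
  moreover have "norm (A *v p) \<le> opnorm A"
    using opnorm_bound[of A p] p by simp
  ultimately show ?thesis
    using p by force
qed

lemma opnorm_eq_zero: "opnorm A = 0 \<longleftrightarrow> A = 0"
proof
  assume "opnorm A = 0"
  then have "A *v x = 0" for x
    using opnorm_bound[of A x] by simp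
  then show "A = 0"
    by (simp add: matrix_eq)
next
  assume "A = 0"
  then have "opnorm A \<le> 0"
    by (intro opnorm_le) simp
  then show "opnorm A = 0"
    using opnorm_nonneg[of A] by simp
qed

lemma opnorm_pos: "A \<noteq> 0 \<Longrightarrow> 0 < opnorm A"
  using opnorm_nonneg[of A] opnorm_eq_zero[of A] by linarith

lemma opnorm_cmscale: "opnorm (cmscale c A) = cmod c * opnorm A"
proof (cases "c = 0")
  case False
  have "opnorm (cmscale c A) \<le> cmod c * opnorm A"
    using opnorm_bound[of A]
    by (intro opnorm_le) (simp add: cmscale_mult_vector norm_vector_smult mult.assoc mult_left_mono)
  moreover have "opnorm A \<le> opnorm (cmscale c A) / cmod c"
  proof (rule opnorm_le)
    fix x
    have "norm (A *v x) = norm (cmscale c A *v x) / cmod c"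
      using False by (simp add: cmscale_mult_vector norm_vector_smult)
    also have "\<dots> \<le> opnorm (cmscale c A) * norm x / cmod c"
      using opnorm_bound[of "cmscale c A" x] by (simp add: divide_right_mono)
    finally show "norm (A *v x) \<le> opnorm (cmscale c A) / cmod c * norm x"
      by simp
  qed
  ultimately show ?thesis
    using False by (simp add: field_simps)
qed (simp add: cmscale_def opnorm_eq_zero vec_eq_iff zero_vec_def)

lemma opnorm_outer: "opnorm (outer s t) = norm s * norm t"
proof (rule antisym)
  show "opnorm (outer s t) \<le> norm s * norm t"
  proof (rule opnorm_le)
    fix x
    have "norm (outer s t *v x) = cmod (cinner t x) * norm s"
      by (simp add: outer_mult_vector norm_vector_smult)
    also have "\<dots> \<le> norm s * norm t * norm x"
      using norm_cinner_le[of t x] by (simp add: mult_left_mono mult_ac)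
    finally show "norm (outer s t *v x) \<le> norm s * norm t * norm x" .
  qed
  have "norm t ^ 2 * norm s \<le> opnorm (outer s t) * norm t"
    using opnorm_bound[of "outer s t" t]
    by (simp add: outer_mult_vector norm_vector_smult cinner_self norm_power)
  then show "norm s * norm t \<le> opnorm (outer s t)"
    by (cases "t = 0") (auto simp: power2_eq_square mult_ac opnorm_nonneg)
qed

lemma norming_vector_conj_transpose:
  assumes np: "norm p = 1" and pn: "norm (A *v p) = opnorm A"
  shows "conj_transpose A *v (A *v p) = of_real ((opnorm A)\<^sup>2) *s p"
proof -
  define \<sigma> where "\<sigma> = opnorm A"
  \<comment> \<open>Unless the defect v vanishes, the competitor p + \<open>\<epsilon>\<close> v beats p.\<close>
  define v where "v = conj_transpose A *v (A *v p) - of_real (\<sigma>\<^sup>2) *s p"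
  define \<epsilon> :: real where "\<epsilon> = 1 / (\<sigma>\<^sup>2 + 1)"
  define x where "x = p + of_real \<epsilon> *s v"
  define N where "N = (norm v)\<^sup>2"
  define Q where "Q = Re (cinner p v)"
  have \<epsilon>_pos: "0 < \<epsilon>" and \<epsilon>\<sigma>: "\<epsilon> * \<sigma>\<^sup>2 \<le> 1"
    by (simp_all add: \<epsilon>_def add_nonneg_pos)
  have "cinner (A *v p) (A *v v) = cinner (v + of_real (\<sigma>\<^sup>2) *s p) v"
    by (simp add: v_def flip: cinner_conj_transpose_left)
  then have "cinner (A *v p) (A *v v) = of_real N + of_real (\<sigma>\<^sup>2) * cinner p v"
    by (simp add: cinner_add_left cinner_smult_left cinner_self N_def)
  then have Ax: "(norm (A *v x))\<^sup>2 = \<sigma>\<^sup>2 + 2 * \<epsilon> * (N + \<sigma>\<^sup>2 * Q) + \<epsilon>\<^sup>2 * (norm (A *v v))\<^sup>2"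
    using pn by (simp add: x_def matrix_vector_right_distrib vector_scalar_commute norm_add_square
        cinner_smult_right norm_vector_smult power_mult_distrib \<sigma>_def Q_def)
  have nx: "(norm x)\<^sup>2 = 1 + 2 * \<epsilon> * Q + \<epsilon>\<^sup>2 * N"
    using np by (simp add: x_def norm_add_square cinner_smult_right norm_vector_smult
        power_mult_distrib Q_def N_def)
  have "(norm (A *v x))\<^sup>2 \<le> (\<sigma> * norm x)\<^sup>2"
    using opnorm_bound[of A x] by (simp add: \<sigma>_def power_mono)
  then have "\<sigma>\<^sup>2 + 2 * \<epsilon> * (N + \<sigma>\<^sup>2 * Q) + \<epsilon>\<^sup>2 * (norm (A *v v))\<^sup>2
      \<le> \<sigma>\<^sup>2 * (1 + 2 * \<epsilon> * Q + \<epsilon>\<^sup>2 * N)"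
    by (simp only: Ax nx power_mult_distrib)
  then have "\<epsilon> * (2 * N) + \<epsilon>\<^sup>2 * (norm (A *v v))\<^sup>2 \<le> \<epsilon> * (\<epsilon> * \<sigma>\<^sup>2 * N)"
    by (simp add: algebra_simps power2_eq_square)
  then have "2 * N \<le> \<epsilon> * \<sigma>\<^sup>2 * N"
    using \<epsilon>_pos by (smt (verit) mult_le_cancel_left_pos zero_le_power2 mult_nonneg_nonneg)
  moreover have "\<epsilon> * \<sigma>\<^sup>2 * N \<le> N"
    using \<epsilon>\<sigma> mult_right_mono[OF \<epsilon>\<sigma>, of N] by (simp add: N_def)
  ultimately have "N \<le> 0"
    by linarith
  then have "v = 0"
    by (simp add: N_def)
  then show ?thesis
    by (simp add: v_def \<sigma>_def)
qed

section \<open>Birkhoff--James orthogonality and smoothness\<close>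

lemma rank_one_perturbation_estimate:
  fixes b z u m :: real
  assumes "b\<^sup>2 + z\<^sup>2 = 1" "0 \<le> u" "u \<le> 1/4" "m\<^sup>2 = u / 4"
  shows "b\<^sup>2 - 2 * u * b\<^sup>2 + 2 * m * b * z + u / 4 \<le> 1 - u"
proof -
  have "0 \<le> (z - 2 * m * b)\<^sup>2"
    by simp
  then have "2 * m * b * z \<le> z\<^sup>2 / 2 + u * b\<^sup>2 / 2"
    using assms(4) by (simp add: power2_eq_square algebra_simps)
  moreover have "b\<^sup>2 \<le> 1"
    using assms(1) zero_le_power2[of z] by linarith
  then have "b\<^sup>2 * (1 - 3 * u) \<le> 1 * (1 - 3 * u)"
    using assms(3) by (intro mult_right_mono) simp_all
  ultimately show ?thesis
    using assms by (simp add: algebra_simps)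
qed

lemma norm_outer_add_cmscale_square_le:
  fixes Z :: "complex^'n^'n"
  assumes ns: "norm s = 1" and nt: "norm t = 1" and nx: "norm x = 1"
    and ca: "c * cinner s (Z *v t) = - of_real u" and m: "cmod c * opnorm Z = m"
    and m2: "m\<^sup>2 = u / 4" and u: "0 \<le> u" "u \<le> 1/4"
  shows "(norm ((outer s t + cmscale c Z) *v x))\<^sup>2 \<le> 1 - u"
proof -
  define \<beta> where "\<beta> = cinner t x"
  define z where "z = x - \<beta> *s t"
  define g where "g = cinner s (Z *v z)"
  have tz: "cinner t z = 0"
    using nt by (simp add: z_def \<beta>_def cinner_diff_right cinner_smult_right cinner_unit_self)
  have "1 = (norm (\<beta> *s t + z))\<^sup>2"
    using nx by (simp add: z_def)
  then have bz: "(cmod \<beta>)\<^sup>2 + (norm z)\<^sup>2 = 1"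
    by (simp add: norm_add_square_orthogonal cinner_smult_left tz norm_vector_smult nt)
  have "cinner s (Z *v x) = \<beta> * cinner s (Z *v t) + g"
    by (simp add: z_def g_def algebra_simps vector_scalar_commute cinner_diff_right
        cinner_smult_right)
  then have "cinner (\<beta> *s s) (c *s (Z *v x))
      = (cnj \<beta> * \<beta>) * (c * cinner s (Z *v t)) + cnj \<beta> * c * g"
    by (simp add: cinner_smult_left cinner_smult_right algebra_simps)
  then have "Re (cinner (\<beta> *s s) (c *s (Z *v x))) = - u * (cmod \<beta>)\<^sup>2 + Re (cnj \<beta> * c * g)"
    by (simp add: cnj_mult_self ca)
  moreover have "Re (cnj \<beta> * c * g) \<le> m * cmod \<beta> * norm z"
  proof -
    have "cmod g \<le> norm (Z *v z)"
      using norm_cinner_le[of s "Z *v z"] ns by (simp add: g_def)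
    also have "\<dots> \<le> opnorm Z * norm z"
      by (rule opnorm_bound)
    finally have g: "cmod g \<le> opnorm Z * norm z" .
    have "Re (cnj \<beta> * c * g) \<le> cmod \<beta> * cmod c * cmod g"
      using complex_Re_le_cmod[of "cnj \<beta> * c * g"] by (simp add: norm_mult)
    also have "\<dots> \<le> cmod \<beta> * cmod c * (opnorm Z * norm z)"
      using g by (intro mult_left_mono) simp_all
    also have "\<dots> = m * cmod \<beta> * norm z"
      by (subst m[symmetric]) (simp add: mult_ac)
    finally show ?thesis .
  qed
  ultimately have cross:
    "Re (cinner (\<beta> *s s) (c *s (Z *v x))) \<le> - u * (cmod \<beta>)\<^sup>2 + m * cmod \<beta> * norm z"
    by linarith
  have "(norm (c *s (Z *v x)))\<^sup>2 \<le> (cmod c * opnorm Z)\<^sup>2"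
    using opnorm_bound[of Z x] nx by (simp add: norm_vector_smult power_mono mult_left_mono)
  then have last: "(norm (c *s (Z *v x)))\<^sup>2 \<le> u / 4"
    by (simp add: m m2)
  have "(outer s t + cmscale c Z) *v x = \<beta> *s s + c *s (Z *v x)"
    by (simp add: matrix_vector_mult_add_rdistrib cmscale_mult_vector outer_mult_vector \<beta>_def)
  then have "(norm ((outer s t + cmscale c Z) *v x))\<^sup>2
      \<le> (cmod \<beta>)\<^sup>2 - 2 * u * (cmod \<beta>)\<^sup>2 + 2 * m * cmod \<beta> * norm z + u / 4"
    using cross last by (simp add: norm_add_square norm_vector_smult ns)
  also have "\<dots> \<le> 1 - u"
    using bz u m2 by (intro rank_one_perturbation_estimate) simp_all
  finally show ?thesis .
qed

lemma opnorm_outer_add_lt_one: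
  fixes Z :: "complex^'n^'n"
  assumes ns: "norm s = 1" and nt: "norm t = 1" and a0: "cinner s (Z *v t) \<noteq> 0"
  shows "\<exists>c. opnorm (outer s t + cmscale c Z) < 1"
proof -
  define a where "a = cinner s (Z *v t)"
  define K where "K = opnorm Z"
  have a_pos: "0 < cmod a"
    using a0 by (simp add: a_def)
  have a_le: "cmod a \<le> K"
    using norm_cinner_le[of s "Z *v t"] opnorm_bound[of Z t] ns nt by (simp add: a_def K_def)
  then have K_pos: "0 < K"
    using a_pos by linarith
  define \<epsilon> where "\<epsilon> = 1 / (4 * K\<^sup>2)"
  define u where "u = \<epsilon> * (cmod a)\<^sup>2"
  \<comment> \<open>Moving from s t* towards -cnj a Z shrinks the image of t by the factor 1 - u; with
    \<open>\<epsilon> = 1/(4 K\<^sup>2)\<close> the cross terms from the complement of t cannot make up for it.\<close>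
  define c where "c = - (of_real \<epsilon> * cnj a)"
  have \<epsilon>_pos: "0 < \<epsilon>" and \<epsilon>K: "\<epsilon> * K\<^sup>2 = 1/4"
    using K_pos by (simp_all add: \<epsilon>_def)
  have u_pos: "0 < u"
    using \<epsilon>_pos a_pos by (simp add: u_def)
  have "\<epsilon> * (cmod a)\<^sup>2 \<le> \<epsilon> * K\<^sup>2"
    using a_pos a_le \<epsilon>_pos by (intro mult_left_mono power_mono) auto
  then have u_le: "u \<le> 1/4"
    using \<epsilon>K by (simp add: u_def)
  have "(cmod c * opnorm Z)\<^sup>2 = u / 4"
    using \<epsilon>_pos \<epsilon>K by (simp add: c_def u_def K_def norm_mult power2_eq_square field_simps)
  moreover have "c * cinner s (Z *v t) = - of_real u"
    using complex_norm_square[of a] by (simp add: c_def u_def a_def mult_ac)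
  ultimately have "(norm ((outer s t + cmscale c Z) *v x))\<^sup>2 \<le> 1 - u" if "norm x = 1" for x
    using ns nt that u_pos u_le
    by (intro norm_outer_add_cmscale_square_le[where m = "cmod c * opnorm Z"]) simp_all
  then have "opnorm (outer s t + cmscale c Z) \<le> sqrt (1 - u)"
    by (intro opnorm_le_unit) (simp add: real_le_rsqrt)
  also have "\<dots> < 1"
    using u_pos u_le by simp
  finally show ?thesis
    by blast
qed

lemma bj_orth_if_norming_perp:
  assumes "norm p = 1" "norm (X *v p) = opnorm X" "cinner (X *v p) (Z *v p) = 0"
  shows "bj_orth X Z"
  unfolding bj_orth_def
proof
  fix c
  have "(norm (X *v p))\<^sup>2 \<le> (norm (X *v p + c *s (Z *v p)))\<^sup>2"
    using assms(3) by (simp add: norm_add_square_orthogonal cinner_smult_right)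
  then have "norm (X *v p) \<le> norm (X *v p + c *s (Z *v p))"
    by (rule power2_le_imp_le) simp
  also have "\<dots> = norm ((X + cmscale c Z) *v p)"
    by (simp add: matrix_vector_mult_add_rdistrib cmscale_mult_vector)
  also have "\<dots> \<le> opnorm (X + cmscale c Z)"
    using opnorm_bound[of _ p] assms(1) by simp
  finally show "opnorm X \<le> opnorm (X + cmscale c Z)"
    using assms(2) by simp
qed

lemma bj_orth_cmscale_left:
  assumes "r \<noteq> 0" "bj_orth X Z"
  shows "bj_orth (cmscale r X) Z"
  unfolding bj_orth_def
proof
  fix c
  have "cmscale r X + cmscale c Z = cmscale r (X + cmscale (c / r) Z)"
    using assms(1) by (simp add: cmscale_add_right cmscale_cmscale)
  then show "opnorm (cmscale r X) \<le> opnorm (cmscale r X + cmscale c Z)"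
    using assms(2) by (simp add: opnorm_cmscale bj_orth_def mult_left_mono)
qed

lemma bj_orth_outer_iff:
  assumes s0: "s \<noteq> 0" and t0: "t \<noteq> 0"
  shows "bj_orth (outer s t) Z \<longleftrightarrow> cinner s (Z *v t) = 0"
proof
  define s' where "s' = of_real (1 / norm s) *s s"
  define t' where "t' = of_real (1 / norm t) *s t"
  assume orth: "bj_orth (outer s t) Z"
  have "outer s' t' = cmscale (of_real (1 / (norm s * norm t))) (outer s t)"
    by (simp add: s'_def t'_def outer_smult)
  then have "bj_orth (outer s' t') Z"
    using s0 t0 orth by (simp add: bj_orth_cmscale_left)
  then have "\<not> opnorm (outer s' t' + cmscale c Z) < 1" for c
    using norm_normalize[OF s0] norm_normalize[OF t0]
    by (simp add: bj_orth_def opnorm_outer s'_def t'_def not_less)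
  then have "cinner s' (Z *v t') = 0"
    using opnorm_outer_add_lt_one norm_normalize[OF s0] norm_normalize[OF t0]
    unfolding s'_def t'_def by blast
  then show "cinner s (Z *v t) = 0"
    using s0 t0
    by (simp add: s'_def t'_def cinner_smult_left cinner_smult_right vector_scalar_commute)
next
  assume perp: "cinner s (Z *v t) = 0"
  define t' where "t' = of_real (1 / norm t) *s t"
  have "outer s t *v t' = of_real (norm t) *s s"
    using t0 by (simp add: outer_mult_vector t'_def cinner_smult_right cinner_self power2_eq_square)
  then show "bj_orth (outer s t) Z"
    using norm_normalize[OF t0] perp
    by (intro bj_orth_if_norming_perp[of t'])
      (simp_all add: norm_vector_smult opnorm_outer t'_def vector_scalar_commute
        cinner_smult_left cinner_smult_right)
qed

lemma orth_set_outer: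
  "s \<noteq> 0 \<Longrightarrow> t \<noteq> 0 \<Longrightarrow> orth_set (outer s t) = {Z. cinner s (Z *v t) = 0}"
  by (auto simp: orth_set_def bj_orth_outer_iff)

lemma orth_set_outer_frob:
  "s \<noteq> 0 \<Longrightarrow> t \<noteq> 0 \<Longrightarrow> orth_set (outer s t) = {Z. frob_inner (outer s t) Z = 0}"
  by (simp add: orth_set_outer frob_inner_outer_left)

lemma bj_orth_outer_if_range_perp:
  assumes "\<And>x. cinner u (Y *v x) = 0"
  shows "bj_orth Y (outer u v)"
proof -
  obtain p where "norm p = 1" "norm (Y *v p) = opnorm Y"
    using opnorm_attained by blast
  moreover have "cinner (Y *v p) (outer u v *v p) = 0"
    using assms[of p] by (simp add: outer_mult_vector cinner_smult_right cinner_eq_zero_sym)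
  ultimately show ?thesis
    by (rule bj_orth_if_norming_perp)
qed

lemma norming_perp_subset_orth_set:
  assumes "norm p = 1" "norm (X *v p) = opnorm X"
  shows "{Z. frob_inner (outer (X *v p) p) Z = 0} \<subseteq> orth_set X"
  using bj_orth_if_norming_perp[OF assms] by (auto simp: orth_set_def frob_inner_outer_left)

lemma smooth_outer:
  assumes "s \<noteq> 0" "t \<noteq> 0"
  shows "smooth (outer s t)"
  unfolding smooth_def
proof
  assume "\<exists>Y. orth_set Y \<subset> orth_set (outer s t)"
  then obtain Y where Y: "orth_set Y \<subset> orth_set (outer s t)"
    by blast
  obtain p where "norm p = 1" "norm (Y *v p) = opnorm Y"
    using opnorm_attained by blast
  then have "{Z. frob_inner (outer (Y *v p) p) Z = 0} \<subseteq> orth_set Y"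
    by (rule norming_perp_subset_orth_set)
  moreover have "outer s t \<noteq> 0"
    using assms by (metis frob_inner_outer_left frob_inner_self_eq_zero outer_mult_vector
        cinner_smult_right cinner_self_eq_zero mult_eq_0_iff)
  ultimately have "orth_set (outer s t) \<subseteq> orth_set Y"
    using Y frob_inner_kernel_subset[of "outer s t" "outer (Y *v p) p"]
    unfolding orth_set_outer_frob[OF assms] by blast
  then show False
    using Y by blast
qed

lemma not_smooth_zero: "\<not> smooth (0::complex^'n^'n)"
proof -
  obtain e :: "complex^'n" where "norm e = 1"
    using vector_choose_size[of 1] by auto
  moreover have "e \<noteq> 0"
    using \<open>norm e = 1\<close> by auto
  ultimately have "outer e e \<notin> orth_set (outer e e)"
    by (simp add: orth_set_outer outer_mult_vector cinner_smult_right cinner_unit_self)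
  moreover have "orth_set 0 = UNIV"
    by (auto simp: orth_set_def bj_orth_def opnorm_eq_zero[THEN iffD2] opnorm_nonneg)
  ultimately have "orth_set (outer e e) \<subset> orth_set 0"
    by blast
  then show ?thesis
    unfolding smooth_def by blast
qed

lemma orth_set_eq_kernel_if_smooth:
  fixes B :: "complex^'n^'n"
  assumes "smooth B"
  shows "\<exists>w x. orth_set B = {Z. cinner w (Z *v x) = 0}"
proof -
  obtain p where np: "norm p = 1" and pn: "norm (B *v p) = opnorm B"
    using opnorm_attained by blast
  have "B \<noteq> 0"
    using assms not_smooth_zero by auto
  then have Bp: "B *v p \<noteq> 0"
    using pn opnorm_pos by fastforce
  have p: "p \<noteq> 0"
    using np by auto
  have "orth_set (outer (B *v p) p) \<subseteq> orth_set B"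
    using norming_perp_subset_orth_set[OF np pn] orth_set_outer_frob[OF Bp p] by simp
  then have "orth_set B = orth_set (outer (B *v p) p)"
    using assms by (auto simp: smooth_def)
  also have "\<dots> = {Z. cinner (B *v p) (Z *v p) = 0}"
    by (rule orth_set_outer[OF Bp p])
  finally show ?thesis
    by blast
qed

section \<open>Left symmetry relative to intersections of orthogonality sets\<close>

lemma outer_left_symmetric_in_smooth_orth_sets:
  fixes u v :: "complex^'n"
  assumes u: "u \<noteq> 0" and v: "v \<noteq> 0"
  obtains k and B :: "'n \<Rightarrow> complex^'n^'n"
  where "\<forall>j\<in>-{k}. smooth (B j)"
    and "left_symmetric_rel (\<Inter>j\<in>-{k}. orth_set (B j)) (outer u v)"
proof -
  obtain k where vk: "v$k \<noteq> 0"
    using v by (auto simp: vec_eq_iff)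
  obtain x where vx: "\<And>j. cinner v (x j) = 0" and x: "\<And>j. j \<noteq> k \<Longrightarrow> x j \<noteq> 0"
    and span: "\<And>r. cinner r v = 0 \<Longrightarrow> (\<And>j. j \<noteq> k \<Longrightarrow> cinner r (x j) = 0) \<Longrightarrow> r = 0"
    using orthogonal_complement_spanning_family[OF vk] by blast
  define B where "B j = outer u (x j)" for j
  let ?S = "\<Inter>j\<in>-{k}. orth_set (B j)"
  have S: "Y \<in> ?S \<longleftrightarrow> (\<forall>j\<in>-{k}. cinner u (Y *v x j) = 0)" for Y
    using u x by (simp add: B_def orth_set_outer)
  have "outer u v \<in> ?S"
    unfolding S by (simp add: outer_mult_vector cinner_smult_right vx)
  moreover have "bj_orth Y (outer u v)" if "Y \<in> ?S" "bj_orth (outer u v) Y" for Y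
  proof -
    define r where "r = conj_transpose Y *v u"
    have r_cinner: "cinner r z = cinner u (Y *v z)" for z
      by (simp add: r_def cinner_conj_transpose_left)
    have "r = 0"
      using that u v S by (intro span) (simp_all add: r_cinner bj_orth_outer_iff)
    then show ?thesis
      by (intro bj_orth_outer_if_range_perp) (simp flip: r_cinner)
  qed
  moreover have "\<forall>j\<in>-{k}. smooth (B j)"
    using u x by (simp add: B_def smooth_outer)
  ultimately show ?thesis
    using that by (auto simp: left_symmetric_rel_def)
qed

lemma cmod_sub_half_add_square_le:
  "(cmod (b - a/2))\<^sup>2 + (cmod (a + b))\<^sup>2 \<le> 9/4 * ((cmod a)\<^sup>2 + (cmod b)\<^sup>2)"
proof -
  have "(cmod (b - a/2))\<^sup>2 + (cmod (a + b))\<^sup>2 + (cmod (a - b/2))\<^sup>2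
      = 9/4 * ((cmod a)\<^sup>2 + (cmod b)\<^sup>2)"
    by (simp only: cmod_power2) (simp add: power2_eq_square algebra_simps)
  then show ?thesis
    by (smt (verit) zero_le_power2)
qed

text \<open>
  From span {p, t} to span {q, s} the matrix s p* + q t* + s t* acts as [[0, 1], [1, 1]], whose
  norm is the golden ratio, while subtracting A/(2 sigma) turns it into the symmetric matrix
  [[-1/2, 1], [1, 1]] with eigenvalues 3/2 and -1; on the orthogonal complement of p and t only
  A/(2 sigma) remains, of norm at most 1/2.
\<close>

context
  fixes A :: "complex^'n^'n" and p q s t :: "complex^'n" and \<sigma> :: real
  assumes units: "norm p = 1" "norm q = 1" "norm s = 1" "norm t = 1"
    and Ap: "A *v p = of_real \<sigma> *s q" and Aq: "conj_transpose A *v q = of_real \<sigma> *s p"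
    and \<sigma>: "\<sigma> = opnorm A" "0 < \<sigma>"
    and perp: "cinner q s = 0" "cinner p t = 0"
    and kernels: "conj_transpose A *v s = 0" "A *v t = 0"
begin

lemma opnorm_three_outer_perturb_le:
  "opnorm (outer s p + outer q t + outer s t + cmscale (- of_real (1 / (2 * \<sigma>))) A) \<le> 3/2"
proof (rule opnorm_le)
  fix x :: "complex^'n"
  define a b where "a = cinner p x" and "b = cinner t x"
  define c :: complex where "c = - of_real (1 / (2 * \<sigma>))"
  obtain z where x: "x = a *s p + b *s t + z" and pz: "cinner p z = 0" and tz: "cinner t z = 0"
    and nx: "(norm x)\<^sup>2 = (cmod a)\<^sup>2 + (cmod b)\<^sup>2 + (norm z)\<^sup>2"
    using orthonormal_pair_decomposition[OF units(1,4) perp(2)] unfolding a_def b_def by blast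
  have Ax: "A *v x = (of_real \<sigma> * a) *s q + A *v z"
    by (subst x) (simp add: matrix_vector_right_distrib vector_scalar_commute Ap kernels
        vector_smult_assoc mult.commute)
  define u1 u2 u3 where "u1 = (b - a/2) *s q" and "u2 = (a + b) *s s" and "u3 = c *s (A *v z)"
  have "(outer s p + outer q t + outer s t + cmscale c A) *v x = u1 + u2 + u3"
    using \<sigma>(2)
    by (simp add: u1_def u2_def u3_def matrix_vector_mult_add_rdistrib cmscale_mult_vector
        outer_mult_vector Ax a_def b_def c_def vec_eq_iff algebra_simps)
  moreover have "cinner q (A *v z) = 0" "cinner s (A *v z) = 0"
    by (simp_all add: cinner_conj_transpose_left[symmetric] Aq kernels cinner_smult_left pz)
  then have "cinner u1 u2 = 0" "cinner u1 u3 = 0" "cinner u2 u3 = 0"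
    unfolding u1_def u2_def u3_def
    by (simp_all only: cinner_smult_left cinner_smult_right perp mult_zero_right)
  ultimately have "(norm ((outer s p + outer q t + outer s t + cmscale c A) *v x))\<^sup>2
      = (cmod (b - a/2))\<^sup>2 + (cmod (a + b))\<^sup>2 + (cmod c * norm (A *v z))\<^sup>2"
    by (simp only: norm_add3_square_orthogonal u1_def u2_def u3_def norm_vector_smult units
        mult_1_right)
  also have "\<dots> \<le> 9/4 * ((cmod a)\<^sup>2 + (cmod b)\<^sup>2) + (norm z / 2)\<^sup>2"
  proof -
    have "cmod c * norm (A *v z) \<le> cmod c * (\<sigma> * norm z)"
      using opnorm_bound[of A z] \<sigma> by (simp add: mult_left_mono)
    also have "\<dots> = norm z / 2"
      using \<sigma>(2) by (simp add: c_def norm_divide)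
    finally show ?thesis
      using cmod_sub_half_add_square_le[of b a]
      by (smt (verit) norm_ge_zero power_mono mult_nonneg_nonneg)
  qed
  also have "\<dots> \<le> (3/2 * norm x)\<^sup>2"
    by (simp add: nx power_mult_distrib power_divide)
  finally show "norm ((outer s p + outer q t + outer s t + cmscale c A) *v x) \<le> 3/2 * norm x"
    by (rule power2_le_imp_le) simp
qed

lemma opnorm_three_outer_gt: "3/2 < opnorm (outer s p + outer q t + outer s t)"
proof -
  define Y where "Y = outer s p + outer q t + outer s t"
  define v where "v = p + 2 *s t"
  have tp: "cinner t p = 0" and sq: "cinner s q = 0"
    using perp by (simp_all add: cinner_eq_zero_sym)
  have nv: "(norm v)\<^sup>2 = 5"
    by (simp add: v_def norm_add_square_orthogonal cinner_smult_right perp norm_vector_smult units)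
  have "Y *v v = 3 *s s + 2 *s q"
    by (simp add: Y_def v_def matrix_vector_mult_add_rdistrib matrix_vector_right_distrib
        outer_mult_vector vector_scalar_commute cinner_add_right cinner_smult_right cinner_unit_self
        units tp perp vec_eq_iff algebra_simps)
  then have nYv: "(norm (Y *v v))\<^sup>2 = 13"
    by (simp add: norm_add_square_orthogonal cinner_smult_left cinner_smult_right sq
        norm_vector_smult units)
  have "(norm (Y *v v))\<^sup>2 \<le> (opnorm Y * norm v)\<^sup>2"
    by (intro power_mono opnorm_bound) simp
  then have "13 \<le> (opnorm Y)\<^sup>2 * 5"
    by (simp add: nYv power_mult_distrib nv)
  then have "(3/2)\<^sup>2 < (opnorm Y)\<^sup>2"
    by (simp add: power2_eq_square)
  then show ?thesis
    using opnorm_nonneg[of Y] unfolding Y_def by (rule power2_less_imp_less)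
qed

lemma three_outer_not_bj_orth: "\<not> bj_orth (outer s p + outer q t + outer s t) A"
  using opnorm_three_outer_perturb_le opnorm_three_outer_gt unfolding bj_orth_def
  by (meson not_le order_le_less_trans)

end

text \<open>
  The j1-th pair of the family does not enter the kernel set, so it is free to be the singular
  pair (q, p) of A.
\<close>

context
  fixes A :: "complex^'n^'n" and w x :: "'n \<Rightarrow> complex^'n" and j1 :: 'n
    and p q :: "complex^'n" and \<sigma> :: real
  assumes LS: "left_symmetric_rel {Y. \<forall>j\<in>-{j1}. cinner (w j) (Y *v x j) = 0} A"
    and np: "norm p = 1" and pn: "norm (A *v p) = opnorm A" and nq: "norm q = 1"
    and \<sigma>: "\<sigma> = opnorm A" "0 < \<sigma>"
    and Ap: "A *v p = of_real \<sigma> *s q" and Aq: "conj_transpose A *v q = of_real \<sigma> *s p"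
    and wj1: "w j1 = q" and xj1: "x j1 = p"
begin

lemma left_symmetric_kernels_vanish:
  assumes "\<And>j. cinner (w j) s = 0 \<or> cinner (x j) t = 0"
  shows "cinner s (A *v t) = 0"
proof (cases "s = 0 \<or> t = 0")
  case False
  then have "s \<noteq> 0" "t \<noteq> 0"
    by auto
  have "outer s t \<in> {Y. \<forall>j\<in>-{j1}. cinner (w j) (Y *v x j) = 0}"
    using assms by (auto simp: outer_mult_vector cinner_smult_right cinner_eq_zero_sym)
  moreover have "bj_orth A (outer s t)"
    using assms[of j1]
    by (intro bj_orth_if_norming_perp[OF np pn])
      (auto simp: Ap wj1 xj1 outer_mult_vector cinner_smult_left cinner_smult_right
        norm_vector_smult cinner_eq_zero_sym)
  ultimately have "bj_orth (outer s t) A"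
    using LS by (auto simp: left_symmetric_rel_def)
  then show ?thesis
    using bj_orth_outer_iff[OF \<open>s \<noteq> 0\<close> \<open>t \<noteq> 0\<close>] by simp
qed auto

lemma left_symmetric_kernels_spanning:
  "(\<forall>s. (\<forall>j. cinner (w j) s = 0) \<longrightarrow> s = 0) \<or> (\<forall>t. (\<forall>j. cinner (x j) t = 0) \<longrightarrow> t = 0)"
proof (rule ccontr)
  assume "\<not> ?thesis"
  then obtain s0 t0 where s0: "s0 \<noteq> 0" "\<And>j. cinner (w j) s0 = 0"
    and t0: "t0 \<noteq> 0" "\<And>j. cinner (x j) t0 = 0"
    by blast
  define s t where "s = of_real (1 / norm s0) *s s0" and "t = of_real (1 / norm t0) *s t0"
  have units: "norm s = 1" "norm t = 1"
    using norm_normalize[OF s0(1)] norm_normalize[OF t0(1)] unfolding s_def t_def by blast+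
  have ws: "cinner (w j) s = 0" and xt: "cinner (x j) t = 0" and tx: "cinner t (x j) = 0" for j
    using s0 t0
    by (simp_all add: s_def t_def cinner_smult_left cinner_smult_right cinner_eq_zero_sym)
  have "cinner (A *v t) (A *v t) = 0"
    using xt by (intro left_symmetric_kernels_vanish) blast
  moreover have "cinner (conj_transpose A *v s) (conj_transpose A *v s) = 0"
    unfolding cinner_conj_transpose_left using ws by (intro left_symmetric_kernels_vanish) blast
  ultimately have kernels: "conj_transpose A *v s = 0" "A *v t = 0"
    by simp_all
  have perp: "cinner q s = 0" "cinner p t = 0"
    using ws[of j1] xt[of j1] by (simp_all add: wj1 xj1)
  let ?Y = "outer s p + outer q t + outer s t"
  have "?Y \<in> {Y. \<forall>j\<in>-{j1}. cinner (w j) (Y *v x j) = 0}"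
    by (simp add: matrix_vector_mult_add_rdistrib outer_mult_vector cinner_add_right
        cinner_smult_right ws tx)
  moreover have "bj_orth A ?Y"
    using perp
    by (intro bj_orth_if_norming_perp[OF np pn])
      (simp_all add: Ap matrix_vector_mult_add_rdistrib outer_mult_vector cinner_add_right
        cinner_smult_left cinner_smult_right cinner_eq_zero_sym)
  ultimately have "bj_orth ?Y A"
    using LS by (auto simp: left_symmetric_rel_def)
  then show False
    using three_outer_not_bj_orth[OF np nq units Ap Aq \<sigma> perp kernels] by blast
qed

lemma left_symmetric_kernels_eq_outer: "A = outer (of_real \<sigma> *s q) p"
proof -
  have vanish: "(\<And>j. cinner (w j) s = 0 \<or> cinner (x j) t = 0) \<Longrightarrow> cinner s (A *v t) = 0"
    for s t
    using left_symmetric_kernels_vanish by blast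
  have diag: "cinner (w j) (A *v x j) = 0" if "j \<noteq> j1" for j
    using LS that by (auto simp: left_symmetric_rel_def)
  from left_symmetric_kernels_spanning show ?thesis
  proof
    assume "\<forall>s. (\<forall>j. cinner (w j) s = 0) \<longrightarrow> s = 0"
    then have span: "s = 0" if "\<And>j. cinner (w j) s = 0" for s
      using that by blast
    have "conj_transpose A = outer (conj_transpose A *v w j1) (w j1)"
      using vanish diag
      by (intro eq_outer_if_vanishing_on_spanning_family[OF span, where x = x and \<sigma> = \<sigma>])
        (simp_all add: cinner_conj_transpose_right cinner_eq_zero_sym wj1 xj1 np nq Ap Aq)
    then have "A = outer q (of_real \<sigma> *s p)"
      by (metis Aq conj_transpose_conj_transpose conj_transpose_outer wj1)
    then show ?thesis
      by (simp add: outer_def vec_eq_iff mult_ac)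
  next
    assume "\<forall>t. (\<forall>j. cinner (x j) t = 0) \<longrightarrow> t = 0"
    then have span: "t = 0" if "\<And>j. cinner (x j) t = 0" for t
      using that by blast
    have "cinner t (A *v s) = 0" if "\<And>j. cinner (x j) s = 0 \<or> cinner (w j) t = 0" for s t
      using that by (intro vanish) blast
    then have "A = outer (A *v x j1) (x j1)"
      using diag
      by (intro eq_outer_if_vanishing_on_spanning_family[OF span, where x = w and \<sigma> = \<sigma>])
        (simp_all add: wj1 xj1 np nq Ap Aq)
    then show ?thesis
      by (simp add: Ap xj1)
  qed
qed

end

lemma left_symmetric_kernels_imp_outer:
  fixes A :: "complex^'n^'n" and w x :: "'n \<Rightarrow> complex^'n"
  assumes "A \<noteq> 0" and LS: "left_symmetric_rel {Y. \<forall>j\<in>-{j1}. cinner (w j) (Y *v x j) = 0} A"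
  shows "\<exists>u v. u \<noteq> 0 \<and> v \<noteq> 0 \<and> A = outer u v"
proof -
  obtain p where np: "norm p = 1" and pn: "norm (A *v p) = opnorm A"
    using opnorm_attained by blast
  define \<sigma> where "\<sigma> = opnorm A"
  define q where "q = of_real (1 / \<sigma>) *s (A *v p)"
  have \<sigma>_pos: "0 < \<sigma>"
    using opnorm_pos[OF assms(1)] by (simp add: \<sigma>_def)
  have Ap: "A *v p = of_real \<sigma> *s q"
    using \<sigma>_pos by (simp add: q_def vector_smult_assoc)
  have nq: "norm q = 1"
    using \<sigma>_pos pn by (simp add: q_def norm_vector_smult norm_divide \<sigma>_def)
  have Aq: "conj_transpose A *v q = of_real \<sigma> *s p"
    using norming_vector_conj_transpose[OF np pn] \<sigma>_pos
    by (simp add: q_def vector_scalar_commute vector_smult_assoc \<sigma>_def power2_eq_square)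
  have "{Y. \<forall>j\<in>-{j1}. cinner ((w(j1 := q)) j) (Y *v (x(j1 := p)) j) = 0}
      = {Y. \<forall>j\<in>-{j1}. cinner (w j) (Y *v x j) = 0}"
    by auto
  with LS have "left_symmetric_rel
      {Y. \<forall>j\<in>-{j1}. cinner ((w(j1 := q)) j) (Y *v (x(j1 := p)) j) = 0} A"
    by simp
  from left_symmetric_kernels_eq_outer[OF this np pn nq \<sigma>_def \<sigma>_pos Ap Aq]
  have A: "A = outer (of_real \<sigma> *s q) p"
    by simp
  have "q \<noteq> 0" "p \<noteq> 0"
    using nq np by auto
  then have "of_real \<sigma> *s q \<noteq> 0"
    using \<sigma>_pos by (auto simp: vec_eq_iff)
  with A \<open>p \<noteq> 0\<close> show ?thesis
    by blast
qed

lemma left_symmetric_in_smooth_orth_sets_imp_outer: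
  fixes A :: "complex^'n^'n" and B :: "'n \<Rightarrow> complex^'n^'n"
  assumes "A \<noteq> 0" "\<forall>j\<in>-{k}. smooth (B j)" "left_symmetric_rel (\<Inter>j\<in>-{k}. orth_set (B j)) A"
  shows "\<exists>u v. u \<noteq> 0 \<and> v \<noteq> 0 \<and> A = outer u v"
proof -
  have "\<exists>w x. orth_set (B j) = {Z. cinner w (Z *v x) = 0}" if "j \<in> -{k}" for j
    using assms(2) that orth_set_eq_kernel_if_smooth by blast
  then obtain w x where wx: "\<And>j. j \<in> -{k} \<Longrightarrow> orth_set (B j) = {Z. cinner (w j) (Z *v x j) = 0}"
    by metis
  have "(\<Inter>j\<in>-{k}. orth_set (B j)) = (\<Inter>j\<in>-{k}. {Y. cinner (w j) (Y *v x j) = 0})"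
    by (rule INF_cong) (simp_all add: wx)
  also have "\<dots> = {Y. \<forall>j\<in>-{k}. cinner (w j) (Y *v x j) = 0}"
    by blast
  finally show ?thesis
    using assms(3) left_symmetric_kernels_imp_outer[OF assms(1)] by simp
qed

lemma bij_betw_atLeastAtMost_Compl:
  "\<exists>g. bij_betw g {2..CARD('n)} (- {k :: 'n::finite})"
proof -
  have "card {2..CARD('n)} = card (- {k})"
    by (simp add: Compl_eq_Diff_UNIV card_Diff_singleton)
  then show ?thesis
    by (intro finite_same_card_bij) auto
qed

lemma INT_reindex:
  assumes "bij_betw g I J"
  shows "(\<Inter>i\<in>I. F (g i)) = (\<Inter>j\<in>J. F j)"
proof -
  have "J = g ` I"
    using assms by (simp add: bij_betw_def)
  then show ?thesis
    by simp
qed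

lemma outer_iff_left_symmetric_in_smooth_orth_sets:
  fixes A :: "complex^'n^'n"
  assumes "A \<noteq> 0"
  shows "(\<exists>u v. u \<noteq> 0 \<and> v \<noteq> 0 \<and> A = outer u v) \<longleftrightarrow>
    (\<exists>k (B :: 'n \<Rightarrow> complex^'n^'n).
       (\<forall>j\<in>-{k}. smooth (B j)) \<and> left_symmetric_rel (\<Inter>j\<in>-{k}. orth_set (B j)) A)"
    (is "?outer \<longleftrightarrow> ?family")
proof
  assume ?outer
  then obtain u v where uv: "u \<noteq> 0" "v \<noteq> 0" and A: "A = outer u v"
    by blast
  obtain k and B :: "'n \<Rightarrow> complex^'n^'n" where "\<forall>j\<in>-{k}. smooth (B j)"
    and "left_symmetric_rel (\<Inter>j\<in>-{k}. orth_set (B j)) (outer u v)"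
    by (rule outer_left_symmetric_in_smooth_orth_sets[OF uv])
  then show ?family
    unfolding A by blast
next
  assume ?family
  then obtain k and B :: "'n \<Rightarrow> complex^'n^'n"
    where "\<forall>j\<in>-{k}. smooth (B j)" "left_symmetric_rel (\<Inter>j\<in>-{k}. orth_set (B j)) A"
    by blast
  then show ?outer
    by (rule left_symmetric_in_smooth_orth_sets_imp_outer[OF assms])
qed

lemma smooth_orth_sets_reindex:
  fixes A :: "complex^'n^'n"
  shows "(\<exists>B :: nat \<Rightarrow> complex^'n^'n.
       (\<forall>i\<in>{2..CARD('n)}. smooth (B i)) \<and>
       A \<in> (\<Inter>i\<in>{2..CARD('n)}. orth_set (B i)) \<and>
       left_symmetric_rel (\<Inter>i\<in>{2..CARD('n)}. orth_set (B i)) A)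
    \<longleftrightarrow> (\<exists>k (B :: 'n \<Rightarrow> complex^'n^'n).
       (\<forall>j\<in>-{k}. smooth (B j)) \<and> left_symmetric_rel (\<Inter>j\<in>-{k}. orth_set (B j)) A)"
    (is "?nat \<longleftrightarrow> ?compl")
proof
  assume ?nat
  then obtain B :: "nat \<Rightarrow> complex^'n^'n" where "\<forall>i\<in>{2..CARD('n)}. smooth (B i)"
    and "left_symmetric_rel (\<Inter>i\<in>{2..CARD('n)}. orth_set (B i)) A"
    by blast
  moreover obtain k :: 'n and g where g: "bij_betw g {2..CARD('n)} (-{k})"
    using bij_betw_atLeastAtMost_Compl by blast
  moreover have "B (inv_into {2..CARD('n)} g (g i)) = B i" if "i \<in> {2..CARD('n)}" for i
    using g that by (simp add: bij_betw_def)
  moreover have "inv_into {2..CARD('n)} g j \<in> {2..CARD('n)}" if "j \<in> -{k}" for j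
    using g that by (metis bij_betw_def inv_into_into)
  ultimately show ?compl
    using INT_reindex[OF g, of "\<lambda>j. orth_set (B (inv_into {2..CARD('n)} g j))"]
    by (intro exI[of _ k] exI[of _ "\<lambda>j. B (inv_into {2..CARD('n)} g j)"]) auto
next
  assume ?compl
  then obtain k and B :: "'n \<Rightarrow> complex^'n^'n" where "\<forall>j\<in>-{k}. smooth (B j)"
    and "left_symmetric_rel (\<Inter>j\<in>-{k}. orth_set (B j)) A"
    by blast
  moreover obtain g where g: "bij_betw g {2..CARD('n)} (-{k})"
    using bij_betw_atLeastAtMost_Compl by blast
  ultimately show ?nat
    using INT_reindex[OF g, of "\<lambda>j. orth_set (B j)"]
    by (intro exI[of _ "B \<circ> g"]) (auto simp: bij_betw_def left_symmetric_rel_def)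
qed

theorem lemma4p2:
  fixes A :: "complex^'n^'n"
  assumes "CARD('n) \<ge> 2" and "A \<noteq> 0"
  shows "rank A = 1 \<longleftrightarrow>
    (\<exists>B :: nat \<Rightarrow> complex^'n^'n.
       (\<forall>i\<in>{2..CARD('n)}. smooth (B i)) \<and>
       A \<in> (\<Inter>i\<in>{2..CARD('n)}. orth_set (B i)) \<and>
       left_symmetric_rel (\<Inter>i\<in>{2..CARD('n)}. orth_set (B i)) A)"
  by (simp only: rank_eq_one_iff_outer outer_iff_left_symmetric_in_smooth_orth_sets[OF assms(2)]
      smooth_orth_sets_reindex)

end
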